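(* Let $\Omega=\{\omega_r=(1,r)^{\mathrm t} : r\in\mathcal R\}\subset\mathbb R^{n+1}$ be a GPT state space with unit effect $u=(1,\mathbf 0)^{\mathrm t}$, and suppose every effect $e\in\mathcal E$ can be written as $e=\gamma\,(1,m)^{\mathrm t}$ with $\gamma\in[0,1]$ and $m\in\mathcal M$, for some set $\mathcal M\subset\mathbb R^n$. Then $$\chi_C(\Omega)\le \sup_{r\in\mathcal R,\ m\in\mathcal M}\log_2(1+m\cdot r)\le \log_2(1+MR),$$ where $M=\sup_{m\in\mathcal M}\lVert m\rVert$ and $R=\sup_{r\in\mathcal R}\lVert r\rVert$.
   Context: A single-system GPT state space is a set $\Omega=\{\omega_r=(1,r)^{\mathrm t}: r\in\mathcal R\}\subset\mathbb R^{n+1}$ with $\mathcal R\subset\mathbb R^n$ compact and convex; the unit effect is $u=(1,\mathbf 0)^{\mathrm t}$. The effect set is $\mathcal E=\{e\in\mathbb R^{n+1}: 0\le e\cdot\omega\le 1\ \forall\omega\in\Omega\}$ (Euclidean inner product). A measurement is a finite family $\{e_y\}\subset\mathcal E$ with $\sum_y e_y=u$; outcome $y$ on state $\omega$ has probability $e_y\cdot\omega$. The classical capacity $\chi_C(\Omega)$ is the supremum of the mutual information $I(X:Y)=\sum_{x,y}p(x,y)\log_2\frac{p(x,y)}{p(x)p(y)}$ over all finite message sets with probability distributions $p_x$, encoding states $\omega_x\in\Omega$ and measurements $\{e_y\}$, where $p(x,y)=p_x\,e_y\cdot\omega_x$. *)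

theory Defs
  imports "HOL-Analysis.Analysis"
begin

text \<open>Vectors of R^(n+1) are represented as pairs (t, v) :: real \<times> (real^'n), whose
  inner product (library Product_Vector) is t*t' + v \<bullet> v', i.e. the Euclidean one.\<close>

definition gpt_state :: "real^'n \<Rightarrow> real \<times> (real^'n)" where
  "gpt_state r = (1, r)"

definition unit_effect :: "real \<times> (real^'n)" where
  "unit_effect = (1, 0)"

definition state_space :: "(real^'n) set \<Rightarrow> (real \<times> (real^'n)) set" where
  "state_space R = gpt_state ` R"

definition effects :: "(real^'n) set \<Rightarrow> (real \<times> (real^'n)) set" where
  "effects R = {e. \<forall>w\<in>state_space R. 0 \<le> e \<bullet> w \<and> e \<bullet> w \<le> 1}"

definition mutual_info :: "('x \<Rightarrow> 'y \<Rightarrow> real) \<Rightarrow> 'x set \<Rightarrow> 'y set \<Rightarrow> real" where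
  "mutual_info P X Y =
     (\<Sum>x\<in>X. \<Sum>y\<in>Y. if P x y = 0 then 0
        else P x y * log 2 (P x y / ((\<Sum>y'\<in>Y. P x y') * (\<Sum>x'\<in>X. P x' y))))"

definition achievable_info :: "(real^'n) set \<Rightarrow> real set" where
  "achievable_info R =
    {mutual_info (\<lambda>x y. p x * (e y \<bullet> w x)) X Y | (X :: nat set) (Y :: nat set) p w e.
       finite X \<and> finite Y \<and> (\<forall>x\<in>X. 0 \<le> p x) \<and> sum p X = 1 \<and>
       (\<forall>x\<in>X. w x \<in> state_space R) \<and> (\<forall>y\<in>Y. e y \<in> effects R) \<and>
       (\<Sum>y\<in>Y. e y) = unit_effect}"

definition classical_capacity :: "(real^'n) set \<Rightarrow> ereal" where
  "classical_capacity R = Sup (ereal ` achievable_info R)"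

definition elog2 :: "ereal \<Rightarrow> ereal" where
  "elog2 x = (if x = \<infinity> then \<infinity> else if 0 < x then ereal (log 2 (real_of_ereal x)) else -\<infinity>)"

end

theory Submission imports Defs begin

text \<open>Write a measurement with effects \<open>e\<^sub>y = \<gamma>\<^sub>y (1, m\<^sub>y)\<close> and encoding states \<open>(1, r\<^sub>x)\<close>.
  The joint distribution is \<open>p\<^sub>x \<gamma>\<^sub>y a\<^sub>x\<^sub>y\<close> with \<open>a\<^sub>x\<^sub>y = 1 + m\<^sub>y \<bullet> r\<^sub>x\<close>; its row marginals are
  \<open>p\<^sub>x\<close> and its column marginals are \<open>\<gamma>\<^sub>y b\<^sub>y\<close> with \<open>b\<^sub>y = 1 + m\<^sub>y \<bullet> r\<close>, \<open>r\<close> the average of the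
  \<open>r\<^sub>x\<close>. Hence the mutual information is \<open>\<Sum> P log a - \<Sum>\<^sub>y \<gamma>\<^sub>y b\<^sub>y log b\<^sub>y\<close>. The first sum is at most
  the supremum of \<open>log (1 + m \<bullet> r)\<close>, and the second is nonnegative because \<open>b log b \<ge> (b - 1)/ln 2\<close>
  while \<open>\<Sum>\<^sub>y \<gamma>\<^sub>y b\<^sub>y = \<Sum>\<^sub>y \<gamma>\<^sub>y = 1\<close>. The second bound is Cauchy-Schwarz.\<close>

lemma minus_one_div_ln2_le_mult_log2:
  fixes b :: real
  assumes "0 \<le> b"
  shows "(b - 1) / ln 2 \<le> b * log 2 b"
proof (cases "b = 0")
  case False
  with assms have b: "0 < b" by simp
  have "1 - 1 / b \<le> ln b"
    using ln_le_minus_one[of "1 / b"] b by (simp add: ln_div)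
  then have "b - 1 \<le> b * ln b"
    using mult_left_mono[OF _ assms] b by (fastforce simp: algebra_simps)
  then show ?thesis
    by (simp add: log_def divide_right_mono)
qed simp

lemma weighted_mult_log2_nonneg:
  fixes g b :: "'a \<Rightarrow> real"
  assumes "\<And>y. y \<in> Y \<Longrightarrow> 0 \<le> g y" "\<And>y. y \<in> Y \<Longrightarrow> 0 < g y \<Longrightarrow> 0 \<le> b y"
    and "sum g Y = 1" "(\<Sum>y\<in>Y. g y * b y) = 1"
  shows "0 \<le> (\<Sum>y\<in>Y. g y * (b y * log 2 (b y)))"
proof -
  have "0 = ((\<Sum>y\<in>Y. g y * b y) - sum g Y) / ln 2"
    using assms(3,4) by simp
  also have "\<dots> = (\<Sum>y\<in>Y. g y * ((b y - 1) / ln 2))"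
    by (simp add: sum_divide_distrib[symmetric] sum_subtractf algebra_simps)
  also have "\<dots> \<le> (\<Sum>y\<in>Y. g y * (b y * log 2 (b y)))"
    using assms(1,2)
    by (intro sum_mono) (fastforce simp: less_le intro: mult_left_mono minus_one_div_ln2_le_mult_log2)
  finally show ?thesis .
qed

lemma mutual_info_cong:
  assumes "\<And>x y. x \<in> X \<Longrightarrow> y \<in> Y \<Longrightarrow> P x y = Q x y"
  shows "mutual_info P X Y = mutual_info Q X Y"
  unfolding mutual_info_def using assms by (intro sum.cong refl) simp

lemma mutual_info_eq_of_factorization:
  fixes P a :: "'x \<Rightarrow> 'y \<Rightarrow> real" and p :: "'x \<Rightarrow> real" and g b :: "'y \<Rightarrow> real"
  assumes X: "finite X"
    and P_nonneg: "\<And>x y. x \<in> X \<Longrightarrow> y \<in> Y \<Longrightarrow> 0 \<le> P x y"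
    and P_eq: "\<And>x y. x \<in> X \<Longrightarrow> y \<in> Y \<Longrightarrow> P x y = p x * g y * a x y"
    and row: "\<And>x. x \<in> X \<Longrightarrow> (\<Sum>y\<in>Y. P x y) = p x"
    and col: "\<And>y. y \<in> Y \<Longrightarrow> (\<Sum>x\<in>X. P x y) = g y * b y"
    and g_nonneg: "\<And>y. y \<in> Y \<Longrightarrow> 0 \<le> g y"
  shows "mutual_info P X Y
    = (\<Sum>x\<in>X. \<Sum>y\<in>Y. if P x y = 0 then 0 else P x y * log 2 (a x y))
      - (\<Sum>y\<in>Y. g y * (b y * log 2 (b y)))"
proof -
  have split: "(if P x y = 0 then 0
        else P x y * log 2 (P x y / ((\<Sum>y'\<in>Y. P x y') * (\<Sum>x'\<in>X. P x' y))))
      = (if P x y = 0 then 0 else P x y * log 2 (a x y)) - P x y * log 2 (b y)"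
    if x: "x \<in> X" and y: "y \<in> Y" for x y
  proof (cases "P x y = 0")
    case False
    with P_nonneg[OF x y] have "0 < P x y" by simp
    moreover have "0 \<le> p x"
      using row[OF x] P_nonneg x by (metis sum_nonneg)
    ultimately have p: "0 < p x" and g: "0 < g y"
      using P_eq[OF x y] g_nonneg[OF y] by (auto simp: less_le)
    with \<open>0 < P x y\<close> have a: "0 < a x y"
      using P_eq[OF x y] mult_pos_pos[OF p g] by (metis zero_less_mult_pos)
    have "P x y \<le> g y * b y"
      using member_le_sum[of x X "\<lambda>x'. P x' y"] P_nonneg y x X col[OF y] by auto
    with \<open>0 < P x y\<close> g have b: "0 < b y"
      by (metis order_less_le_trans zero_less_mult_pos)
    have "P x y / ((\<Sum>y'\<in>Y. P x y') * (\<Sum>x'\<in>X. P x' y)) = a x y / b y"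
      using P_eq[OF x y] row[OF x] col[OF y] p g by (simp add: field_simps)
    with False a b show ?thesis
      by (simp add: log_divide algebra_simps)
  qed simp
  have "(\<Sum>x\<in>X. \<Sum>y\<in>Y. P x y * log 2 (b y)) = (\<Sum>y\<in>Y. g y * (b y * log 2 (b y)))"
    by (subst sum.swap) (simp add: sum_distrib_right[symmetric] col mult.assoc)
  then show ?thesis
    unfolding mutual_info_def by (simp add: split sum_subtractf cong: sum.cong)
qed

lemma mutual_info_le_of_factorization:
  fixes P a :: "'x \<Rightarrow> 'y \<Rightarrow> real" and p :: "'x \<Rightarrow> real" and g b :: "'y \<Rightarrow> real"
  assumes X: "finite X"
    and P_nonneg: "\<And>x y. x \<in> X \<Longrightarrow> y \<in> Y \<Longrightarrow> 0 \<le> P x y"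
    and P_eq: "\<And>x y. x \<in> X \<Longrightarrow> y \<in> Y \<Longrightarrow> P x y = p x * g y * a x y"
    and row: "\<And>x. x \<in> X \<Longrightarrow> (\<Sum>y\<in>Y. P x y) = p x"
    and col: "\<And>y. y \<in> Y \<Longrightarrow> (\<Sum>x\<in>X. P x y) = g y * b y"
    and g_nonneg: "\<And>y. y \<in> Y \<Longrightarrow> 0 \<le> g y"
    and p_sum: "sum p X = 1" and g_sum: "sum g Y = 1"
    and bound: "\<And>x y. x \<in> X \<Longrightarrow> y \<in> Y \<Longrightarrow> 0 < P x y \<Longrightarrow> log 2 (a x y) \<le> s"
  shows "mutual_info P X Y \<le> s"
proof -
  have "(\<Sum>x\<in>X. \<Sum>y\<in>Y. if P x y = 0 then 0 else P x y * log 2 (a x y))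
      \<le> (\<Sum>x\<in>X. \<Sum>y\<in>Y. P x y * s)"
    using bound P_nonneg by (intro sum_mono) (fastforce simp: less_le intro: mult_left_mono)
  also have "\<dots> = s"
    using row p_sum by (simp add: sum_distrib_right[symmetric])
  finally have first_le: "(\<Sum>x\<in>X. \<Sum>y\<in>Y. if P x y = 0 then 0 else P x y * log 2 (a x y)) \<le> s" .
  have "(\<Sum>y\<in>Y. g y * b y) = (\<Sum>x\<in>X. \<Sum>y\<in>Y. P x y)"
    by (subst sum.swap) (simp add: col)
  also have "\<dots> = 1"
    using row p_sum by simp
  finally have "(\<Sum>y\<in>Y. g y * b y) = 1" .
  moreover have "0 \<le> b y" if "y \<in> Y" "0 < g y" for y
    using col[of y] sum_nonneg[of X "\<lambda>x. P x y"] P_nonneg that by (simp add: zero_le_mult_iff)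
  ultimately have "0 \<le> (\<Sum>y\<in>Y. g y * (b y * log 2 (b y)))"
    using g_nonneg g_sum by (intro weighted_mult_log2_nonneg[of Y g b]) auto
  moreover have "mutual_info P X Y
      = (\<Sum>x\<in>X. \<Sum>y\<in>Y. if P x y = 0 then 0 else P x y * log 2 (a x y))
        - (\<Sum>y\<in>Y. g y * (b y * log 2 (b y)))"
    by (rule mutual_info_eq_of_factorization[where p = p]) (use X P_nonneg P_eq row col g_nonneg in auto)
  ultimately show ?thesis
    using first_le by linarith
qed

lemma mutual_info_affine_effects_le:
  fixes r :: "'x \<Rightarrow> 'a::real_inner" and m :: "'y \<Rightarrow> 'a"
  assumes X: "finite X"
    and p_nonneg: "\<And>x. x \<in> X \<Longrightarrow> 0 \<le> p x" and p_sum: "sum p X = 1"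
    and g_nonneg: "\<And>y. y \<in> Y \<Longrightarrow> 0 \<le> g y" and g_sum: "sum g Y = 1"
    and gm_sum: "(\<Sum>y\<in>Y. g y *\<^sub>R m y) = 0"
    and prob_nonneg: "\<And>x y. x \<in> X \<Longrightarrow> y \<in> Y \<Longrightarrow> 0 \<le> g y * (1 + m y \<bullet> r x)"
    and bound: "\<And>x y. x \<in> X \<Longrightarrow> y \<in> Y \<Longrightarrow> 0 < 1 + m y \<bullet> r x
      \<Longrightarrow> log 2 (1 + m y \<bullet> r x) \<le> s"
  shows "mutual_info (\<lambda>x y. p x * (g y * (1 + m y \<bullet> r x))) X Y \<le> s"
proof (rule mutual_info_le_of_factorization[OF X])
  define r_avg where "r_avg = (\<Sum>x\<in>X. p x *\<^sub>R r x)"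
  show "(\<Sum>x\<in>X. p x * (g y * (1 + m y \<bullet> r x))) = g y * (1 + m y \<bullet> r_avg)" for y
  proof -
    have "(\<Sum>x\<in>X. p x * (g y * (1 + m y \<bullet> r x))) = g y * (sum p X + m y \<bullet> r_avg)"
      by (simp add: r_avg_def inner_sum_right sum.distrib sum_distrib_left algebra_simps)
    with p_sum show ?thesis by simp
  qed
  show "(\<Sum>y\<in>Y. p x * (g y * (1 + m y \<bullet> r x))) = p x" for x
  proof -
    have "(\<Sum>y\<in>Y. p x * (g y * (1 + m y \<bullet> r x))) = p x * (sum g Y + (\<Sum>y\<in>Y. g y *\<^sub>R m y) \<bullet> r x)"
      by (simp add: inner_sum_left sum.distrib sum_distrib_left algebra_simps)
    with g_sum gm_sum show ?thesis by simp
  qed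
  show "0 < p x * (g y * (1 + m y \<bullet> r x)) \<Longrightarrow> log 2 (1 + m y \<bullet> r x) \<le> s"
    if "x \<in> X" "y \<in> Y" for x y
    using bound[OF that] p_nonneg[OF that(1)] g_nonneg[OF that(2)]
    by (simp add: zero_less_mult_iff)
qed (use p_nonneg prob_nonneg g_nonneg p_sum g_sum in auto)

lemma achievable_info_le:
  fixes R M :: "(real^'n) set"
  assumes decomp: "\<forall>e\<in>effects R. \<exists>\<gamma> m. 0 \<le> \<gamma> \<and> \<gamma> \<le> 1 \<and> m \<in> M \<and> e = \<gamma> *\<^sub>R (1, m)"
    and I: "I \<in> achievable_info R"
    and bound: "\<And>r m. r \<in> R \<Longrightarrow> m \<in> M \<Longrightarrow> 0 < 1 + m \<bullet> r \<Longrightarrow> log 2 (1 + m \<bullet> r) \<le> s"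
  shows "I \<le> s"
proof -
  from I obtain X Y :: "nat set" and p w e
    where I_eq: "I = mutual_info (\<lambda>x y. p x * (e y \<bullet> w x)) X Y"
      and X: "finite X" and p_nonneg: "\<forall>x\<in>X. 0 \<le> p x" and p_sum: "sum p X = 1"
      and w: "\<forall>x\<in>X. w x \<in> state_space R" and e: "\<forall>y\<in>Y. e y \<in> effects R"
      and e_sum: "(\<Sum>y\<in>Y. e y) = unit_effect"
    unfolding achievable_info_def by blast
  have "\<forall>x\<in>X. \<exists>r\<in>R. w x = (1, r)"
    using w by (auto simp: state_space_def gpt_state_def)
  then obtain r where r: "\<And>x. x \<in> X \<Longrightarrow> r x \<in> R \<and> w x = (1, r x)"
    by metis
  have "\<forall>y\<in>Y. \<exists>\<gamma> m. 0 \<le> \<gamma> \<and> m \<in> M \<and> e y = \<gamma> *\<^sub>R (1, m)"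
    using e decomp by blast
  then obtain g m where gm: "\<And>y. y \<in> Y \<Longrightarrow> 0 \<le> g y \<and> m y \<in> M \<and> e y = g y *\<^sub>R (1, m y)"
    by metis
  have ew: "e y \<bullet> w x = g y * (1 + m y \<bullet> r x)" if "x \<in> X" "y \<in> Y" for x y
    using r[OF that(1)] gm[OF that(2)] by (simp add: algebra_simps)
  have "(\<Sum>y\<in>Y. g y *\<^sub>R (1, m y)) = unit_effect"
    using e_sum gm by (simp cong: sum.cong)
  then have g_sum: "sum g Y = 1" and gm_sum: "(\<Sum>y\<in>Y. g y *\<^sub>R m y) = 0"
    by (auto simp: unit_effect_def prod_eq_iff fst_sum snd_sum)
  have "mutual_info (\<lambda>x y. p x * (g y * (1 + m y \<bullet> r x))) X Y \<le> s"
  proof (rule mutual_info_affine_effects_le[OF X _ p_sum _ g_sum gm_sum])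
    show "0 \<le> g y * (1 + m y \<bullet> r x)" if "x \<in> X" "y \<in> Y" for x y
      using e w that ew by (force simp: effects_def)
  qed (use p_nonneg gm r bound in auto)
  then show ?thesis
    using I_eq ew by (simp cong: mutual_info_cong)
qed

lemma elog2_ereal_pos: "0 < t \<Longrightarrow> elog2 (ereal t) = ereal (log 2 t)"
  by (simp add: elog2_def)

lemma elog2_mono: "x \<le> y \<Longrightarrow> elog2 x \<le> elog2 y"
  unfolding elog2_def by (cases x; cases y) auto

lemma classical_capacity_le_SUP_log:
  fixes R M :: "(real^'n) set"
  assumes decomp: "\<forall>e\<in>effects R. \<exists>\<gamma> m. 0 \<le> \<gamma> \<and> \<gamma> \<le> 1 \<and> m \<in> M \<and> e = \<gamma> *\<^sub>R (1, m)"
  shows "classical_capacity R \<le> (SUP rm\<in>R \<times> M. elog2 (ereal (1 + snd rm \<bullet> fst rm)))"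
    (is "_ \<le> ?S")
  unfolding classical_capacity_def
proof (rule Sup_least)
  fix z
  assume "z \<in> ereal ` achievable_info R"
  then obtain I where z: "z = ereal I" and I: "I \<in> achievable_info R"
    by blast
  show "z \<le> ?S"
    unfolding z
  proof (rule ereal_le_real)
    fix s
    assume S_le: "?S \<le> ereal s"
    have "log 2 (1 + m \<bullet> r) \<le> s" if "r \<in> R" "m \<in> M" "0 < 1 + m \<bullet> r" for r m
    proof -
      have "elog2 (ereal (1 + m \<bullet> r)) \<le> ?S"
        using that by (intro SUP_upper2[of "(r, m)"]) auto
      from order_trans[OF this S_le] that show ?thesis
        by (simp add: elog2_ereal_pos)
    qed
    then show "ereal I \<le> ereal s"
      using achievable_info_le[OF decomp I] by simp
  qed
qed

lemma SUP_log_le_log_norm_bound: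
  fixes R M :: "'a::real_inner set"
  shows "(SUP rm\<in>R \<times> M. elog2 (ereal (1 + snd rm \<bullet> fst rm)))
    \<le> elog2 (1 + (SUP m\<in>M. ereal (norm m)) * (SUP r\<in>R. ereal (norm r)))"
proof (rule SUP_least, clarify)
  fix r m
  assume "r \<in> R" "m \<in> M"
  have "ereal (m \<bullet> r) \<le> ereal (norm m) * ereal (norm r)"
    using norm_cauchy_schwarz[of m r] by simp
  also have "\<dots> \<le> (SUP m\<in>M. ereal (norm m)) * (SUP r\<in>R. ereal (norm r))"
    using \<open>r \<in> R\<close> \<open>m \<in> M\<close> by (intro ereal_mult_mono' SUP_upper2) auto
  finally have "1 + ereal (m \<bullet> r) \<le> 1 + (SUP m\<in>M. ereal (norm m)) * (SUP r\<in>R. ereal (norm r))"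
    by (rule add_left_mono)
  then show "elog2 (ereal (1 + snd (r, m) \<bullet> fst (r, m)))
      \<le> elog2 (1 + (SUP m\<in>M. ereal (norm m)) * (SUP r\<in>R. ereal (norm r)))"
    by (simp add: elog2_mono one_ereal_def)
qed

theorem proposition1:
  fixes R :: "(real^'n) set" and M :: "(real^'n) set"
  assumes "compact R" and "convex R"
    and "\<forall>e\<in>effects R. \<exists>\<gamma> m. 0 \<le> \<gamma> \<and> \<gamma> \<le> 1 \<and> m \<in> M \<and> e = \<gamma> *\<^sub>R (1, m)"
  shows "classical_capacity R \<le> (SUP rm\<in>R \<times> M. elog2 (ereal (1 + snd rm \<bullet> fst rm)))
       \<and> (SUP rm\<in>R \<times> M. elog2 (ereal (1 + snd rm \<bullet> fst rm)))
           \<le> elog2 (1 + (SUP m\<in>M. ereal (norm m)) * (SUP r\<in>R. ereal (norm r)))"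
  using classical_capacity_le_SUP_log[OF assms(3)] SUP_log_le_log_norm_bound by blast

end
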